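(* Let $r\ge1$ and $n\in\mathbb{Z}_{>0}$. Every $\omega\in\Omega^r_n$ satisfies $|\xi|\le|\omega|\le|\xi|\,|\pi|^{-n}$.
   Context: Let $F$ be a global function field, $\infty$ a place of $F$, $\pi$ a uniformizer at $\infty$, $F_\infty$ the completion at $\infty$, $\mathbb{C}_\infty$ the completion of an algebraic closure of $F_\infty$ with absolute value $|\cdot|$. Fix $\xi\in\mathbb{C}_\infty^\times$. $\Omega^r$ is the set of column vectors $\omega=(\omega_1,\dots,\omega_r)^T\in\mathbb{C}_\infty^r$ with $F_\infty$-linearly independent entries and $\omega_r=\xi$. A linear form $F_\infty^r\to F_\infty$ is unimodular if its largest coefficient has absolute value $1$. Put $|\omega|:=\max_i|\omega_i|$, $h(\omega):=|\omega|^{-1}\inf\{|\ell(\omega)|:\ell$ a unimodular $F_\infty$-linear form$\}$, and $\Omega^r_n:=\{\omega\in\Omega^r:h(\omega)\ge|\pi|^n\}$. *)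

theory Defs
  imports "HOL-Computational_Algebra.Polynomial"
begin

text \<open>Abstract setting: the ambient field 'a plays the role of C_infinity, with a
 (multiplicative, non-archimedean, non-trivial) absolute value av; the set K plays the
 role of the subfield F_infinity.\<close>

definition nonarch_abs_value :: "('a::field \<Rightarrow> real) \<Rightarrow> bool" where
  "nonarch_abs_value av \<longleftrightarrow>
     (\<forall>x. av x \<ge> 0) \<and> (\<forall>x. av x = 0 \<longleftrightarrow> x = 0) \<and>
     (\<forall>x y. av (x * y) = av x * av y) \<and>
     (\<forall>x y. av (x + y) \<le> max (av x) (av y)) \<and>
     (\<exists>x. av x \<noteq> 0 \<and> av x \<noteq> 1)"

definition subfield_of :: "'a::field set \<Rightarrow> bool" where
  "subfield_of K \<longleftrightarrow> 0 \<in> K \<and> 1 \<in> K \<and>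
     (\<forall>x\<in>K. \<forall>y\<in>K. x + y \<in> K \<and> x * y \<in> K) \<and>
     (\<forall>x\<in>K. - x \<in> K \<and> inverse x \<in> K)"

definition av_complete :: "('a::field \<Rightarrow> real) \<Rightarrow> 'a set \<Rightarrow> bool" where
  "av_complete av S \<longleftrightarrow>
     (\<forall>x::nat \<Rightarrow> 'a. (\<forall>m. x m \<in> S) \<and>
        (\<forall>e>0. \<exists>N. \<forall>m\<ge>N. \<forall>k\<ge>N. av (x m - x k) < e) \<longrightarrow>
        (\<exists>L\<in>S. \<forall>e>0. \<exists>N. \<forall>m\<ge>N. av (x m - L) < e))"

definition alg_closed_field :: "'a::field itself \<Rightarrow> bool" where
  "alg_closed_field _ \<longleftrightarrow> (\<forall>p::'a poly. degree p > 0 \<longrightarrow> (\<exists>z. poly p z = 0))"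

definition uniformizer :: "('a::field \<Rightarrow> real) \<Rightarrow> 'a set \<Rightarrow> 'a \<Rightarrow> bool" where
  "uniformizer av K \<pi> \<longleftrightarrow> \<pi> \<in> K \<and> 0 < av \<pi> \<and> av \<pi> < 1 \<and>
     (\<forall>x\<in>K. x \<noteq> 0 \<longrightarrow> (\<exists>k::int. av x = av \<pi> powi k))"

definition finite_residue_field :: "('a::field \<Rightarrow> real) \<Rightarrow> 'a set \<Rightarrow> bool" where
  "finite_residue_field av K \<longleftrightarrow>
     finite ((\<lambda>x. {y\<in>K. av y \<le> 1 \<and> av (x - y) < 1}) ` {x\<in>K. av x \<le> 1})"

text \<open>Vectors omega = (omega_1,...,omega_r) are functions nat => 'a on indices 1..r.\<close>
definition vnorm :: "('a \<Rightarrow> real) \<Rightarrow> nat \<Rightarrow> (nat \<Rightarrow> 'a) \<Rightarrow> real" where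
  "vnorm av r \<omega> = Max ((\<lambda>i. av (\<omega> i)) ` {1..r})"

definition unimodular :: "('a \<Rightarrow> real) \<Rightarrow> 'a set \<Rightarrow> nat \<Rightarrow> (nat \<Rightarrow> 'a) \<Rightarrow> bool" where
  "unimodular av K r c \<longleftrightarrow> (\<forall>i\<in>{1..r}. c i \<in> K) \<and> Max ((\<lambda>i. av (c i)) ` {1..r}) = 1"

definition hgt :: "('a::field \<Rightarrow> real) \<Rightarrow> 'a set \<Rightarrow> nat \<Rightarrow> (nat \<Rightarrow> 'a) \<Rightarrow> real" where
  "hgt av K r \<omega> = inverse (vnorm av r \<omega>) *
      Inf {av (\<Sum>i=1..r. c i * \<omega> i) | c. unimodular av K r c}"

definition Omega :: "('a::field \<Rightarrow> real) \<Rightarrow> 'a set \<Rightarrow> nat \<Rightarrow> 'a \<Rightarrow> (nat \<Rightarrow> 'a) set" where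
  "Omega av K r \<xi> = {\<omega>. \<omega> r = \<xi> \<and>
      (\<forall>c. (\<forall>i\<in>{1..r}. c i \<in> K) \<and> (\<Sum>i=1..r. c i * \<omega> i) = 0 \<longrightarrow> (\<forall>i\<in>{1..r}. c i = 0))}"

definition Omega_n :: "('a::field \<Rightarrow> real) \<Rightarrow> 'a set \<Rightarrow> nat \<Rightarrow> 'a \<Rightarrow> 'a \<Rightarrow> nat \<Rightarrow> (nat \<Rightarrow> 'a) set" where
  "Omega_n av K r \<xi> \<pi> n = {\<omega> \<in> Omega av K r \<xi>. hgt av K r \<omega> \<ge> av \<pi> ^ n}"

end

theory Submission
  imports Defs
begin

text \<open>The lower bound holds because \<open>\<xi>\<close> is a coordinate of \<open>\<omega>\<close>. For the upper bound, the
 coordinate form \<open>\<ell>(\<omega>) = \<omega>\<^sub>r = \<xi>\<close> is unimodular, so \<open>h(\<omega>) |\<omega>| \<le> |\<xi>|\<close>; combined with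
 \<open>h(\<omega>) \<ge> |\<pi>|\<^sup>n\<close> this gives \<open>|\<omega>| \<le> |\<xi>| |\<pi>|\<^sup>-\<^sup>n\<close>.\<close>

lemma nonarch_abs_valueD:
  assumes "nonarch_abs_value av"
  shows "av x \<ge> 0" and "av x = 0 \<longleftrightarrow> x = 0" and "av (x * y) = av x * av y"
  using assms unfolding nonarch_abs_value_def by simp_all

lemma nonarch_abs_value_pos:
  assumes "nonarch_abs_value av" and "x \<noteq> 0"
  shows "av x > 0"
  using nonarch_abs_valueD[OF assms(1), of x] assms(2) by linarith

lemma nonarch_abs_value_one:
  assumes "nonarch_abs_value av"
  shows "av 1 = 1"
  using nonarch_abs_valueD(3)[OF assms, of 1 1] nonarch_abs_value_pos[OF assms, of 1] by simp

lemma av_le_vnorm: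
  assumes "i \<in> {1..r}"
  shows "av (\<omega> i) \<le> vnorm av r \<omega>"
  unfolding vnorm_def using assms by (intro Max_ge) auto

lemma unimodular_coordinate_form:
  assumes "nonarch_abs_value av" and "subfield_of K" and "j \<in> {1..r}"
  shows "unimodular av K r (\<lambda>i. if i = j then 1 else 0)"
proof -
  have "av 0 = 0" and "av 1 = 1"
    using nonarch_abs_valueD(2)[OF assms(1)] nonarch_abs_value_one[OF assms(1)] by simp_all
  moreover have "0 \<in> K" and "1 \<in> K"
    using assms(2) unfolding subfield_of_def by simp_all
  ultimately show ?thesis
    unfolding unimodular_def using assms(3) by (intro conjI Max_eqI) auto
qed

lemma coordinate_form_apply:
  fixes \<omega> :: "nat \<Rightarrow> 'a::field"
  assumes "j \<in> {1..r}"
  shows "(\<Sum>i=1..r. (if i = j then 1 else 0) * \<omega> i) = \<omega> j"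
  using assms by (simp add: if_distrib[of "\<lambda>c. c * _"] cong: if_cong)

lemma hgt_mult_vnorm_le:
  assumes "nonarch_abs_value av" and "unimodular av K r c" and "vnorm av r \<omega> > 0"
  shows "hgt av K r \<omega> * vnorm av r \<omega> \<le> av (\<Sum>i=1..r. c i * \<omega> i)"
proof -
  let ?S = "{av (\<Sum>i=1..r. c i * \<omega> i) | c. unimodular av K r c}"
  have "av (\<Sum>i=1..r. c i * \<omega> i) \<in> ?S"
    using assms(2) by blast
  moreover have "bdd_below ?S"
    using nonarch_abs_valueD(1)[OF assms(1)] by (auto intro: bdd_belowI[of _ 0])
  ultimately have "Inf ?S \<le> av (\<Sum>i=1..r. c i * \<omega> i)"
    by (rule cInf_lower)
  then show ?thesis
    using assms(3) unfolding hgt_def by (simp add: field_simps)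
qed

theorem lemma3p3:
  fixes av :: "'a::field \<Rightarrow> real" and K :: "'a set" and \<pi> \<xi> :: 'a
    and r n :: nat and \<omega> :: "nat \<Rightarrow> 'a"
  assumes "nonarch_abs_value av"
    and "alg_closed_field TYPE('a)"
    and "av_complete av UNIV"
    and "subfield_of K"
    and "av_complete av K"
    and "finite_residue_field av K"
    and "uniformizer av K \<pi>"
    and "\<xi> \<noteq> 0"
    and "r \<ge> 1" and "n > 0"
    and "\<omega> \<in> Omega_n av K r \<xi> \<pi> n"
  shows "av \<xi> \<le> vnorm av r \<omega> \<and> vnorm av r \<omega> \<le> av \<xi> * av \<pi> powi (- int n)"
proof -
  have r: "r \<in> {1..r}" using assms(9) by simp
  have \<omega>r: "\<omega> r = \<xi>" and hgt: "av \<pi> ^ n \<le> hgt av K r \<omega>"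
    using assms(11) unfolding Omega_n_def Omega_def by auto
  have lower: "av \<xi> \<le> vnorm av r \<omega>"
    using av_le_vnorm[OF r, of av \<omega>] \<omega>r by simp
  then have vnorm_pos: "vnorm av r \<omega> > 0"
    using nonarch_abs_value_pos[OF assms(1,8)] by linarith
  have "av \<pi> ^ n * vnorm av r \<omega> \<le> hgt av K r \<omega> * vnorm av r \<omega>"
    using hgt vnorm_pos by (simp add: mult_right_mono)
  also have "\<dots> \<le> av \<xi>"
    using hgt_mult_vnorm_le[OF assms(1) unimodular_coordinate_form[OF assms(1,4) r] vnorm_pos]
    by (simp only: coordinate_form_apply[OF r] \<omega>r)
  finally have "vnorm av r \<omega> \<le> av \<xi> / av \<pi> ^ n"
    using assms(7) unfolding uniformizer_def by (simp add: field_simps)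
  then show ?thesis
    using lower by (simp add: power_int_minus divide_inverse)
qed

end
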